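(* Let $Y$ be a regular space, let $X\subseteq Y$ be such that $\psi(X)<\mathfrak b$, and let $(S,\mathcal S)$ be an $\alpha$-scaffold in $X$. Then there exists $S'\le_{\mathcal S}S$ that is closed in $X$.
   Context: $\mathfrak b$ is the least cardinality of an unbounded family in $\omega^\omega$. For a space $Z$ and $z\in Z$, $\psi(Z,z)$ is the least cardinality of a family $\mathcal U$ of open neighbourhoods of $z$ with $\bigcap\mathcal U=\{z\}$, and $\psi(Z)=\sup_{z\in Z}\psi(Z,z)$. Scaffolds in a space $X$ are defined by recursion. A pair $(S,\mathcal S)$ with $S\subseteq X$, $\mathcal S\subseteq 2^S$ is: (S.0) a $0$-scaffold if $S=\{x\}$, $\mathcal S=\{S\}$; then $\mathrm{ht}(S)=\mathrm{ht}_S(x)=0$ and $\mathrm{cor}\,S=x$. (S.1) an $\alpha$-scaffold if there are $x\in S$, pairwise disjoint open sets $U_n\subseteq X$, and $\alpha_n$-scaffolds $(S_n,\mathcal S_n)$ $(n\in\omega)$ with $(\alpha_n)$ nondecreasing, $\alpha=\min\{\beta:\beta>\alpha_n\text{ for all }n\}$, $\mathrm{cor}\,S_n\to x$, $\overline{S_n}\subseteq U_n$, $x\notin\overline{U_n}$, $S=\{x\}\cup\bigcup_nS_n$, $\mathcal S=\{S\}\cup\bigcup_n\mathcal S_n$; then $\mathrm{ht}(S)=\mathrm{ht}_S(x)=\alpha$, $\mathrm{ht}_S(x')=\mathrm{ht}_{S_n}(x')$ for $x'\in S_n$, and $\mathrm{cor}\,S=x$. $\mathcal S$ is a stratification of $S$.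 For $S''\in\mathcal S$ let $\mathcal S|_{S''}=\{T\in\mathcal S:T\subseteq S''\}$; $\mathcal S^-$ is the set of $\subseteq$-maximal elements of $\mathcal S\setminus\{S\}$. Recursively, for $S'\subseteq S$, $S'\le_{\mathcal S}S$ means $\mathrm{cor}\,S'=\mathrm{cor}\,S$ and there is a stratification $\mathcal S'$ of $S'$ such that $\mathcal S'^-\neq\emptyset$ whenever $\mathcal S^-\neq\emptyset$, and each $\beta$-scaffold $B'\in\mathcal S'^-$ satisfies $B'\le_{\mathcal S|_B}B$ for some $\beta$-scaffold $B\in\mathcal S^-$. *)

theory Defs
  imports "HOL-Analysis.Analysis" "HOL-Library.Equipollence"
begin

definition unbounded_family :: "(nat \<Rightarrow> nat) set \<Rightarrow> bool" where
  "unbounded_family F \<longleftrightarrow> \<not> (\<exists>g. \<forall>f\<in>F. \<forall>\<^sub>F n in sequentially. f n \<le> g n)"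

text \<open>|K| < b, i.e. every family of cardinality at most |K| is bounded
  (b being the least cardinality of an unbounded family).\<close>
definition card_below_b :: "'b set \<Rightarrow> bool" where
  "card_below_b K \<longleftrightarrow> (\<forall>F :: (nat \<Rightarrow> nat) set. F \<lesssim> K \<longrightarrow> \<not> unbounded_family F)"

text \<open>psi(X) < b: there is a cardinal |K| < b such that psi(X,z) \<le> |K| for all z,
  i.e. every point z has a family of at most |K| open neighbourhoods whose
  intersection (inside the space) is {z}.\<close>
definition psi_below_b :: "'a topology \<Rightarrow> bool" where
  "psi_below_b X \<longleftrightarrow> (\<exists>K :: 'a set set. card_below_b K \<and>
     (\<forall>z\<in>topspace X. \<exists>\<U>. \<U> \<lesssim> K \<and> (\<forall>U\<in>\<U>. openin X U \<and> z \<in> U)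
                          \<and> topspace X \<inter> \<Inter>\<U> = {z}))"

text \<open>scaffold T \<alpha> x S SS: (S, SS) is an \<alpha>-scaffold in the space T with core x.
  Heights live in an arbitrary well-ordered type 'o (standing for the ordinals).\<close>
inductive scaffold :: "'a topology \<Rightarrow> 'o::wellorder \<Rightarrow> 'a \<Rightarrow> 'a set \<Rightarrow> 'a set set \<Rightarrow> bool"
  for T :: "'a topology" where
  zero: "\<lbrakk>\<forall>\<beta>. \<alpha> \<le> \<beta>; x \<in> topspace T\<rbrakk> \<Longrightarrow> scaffold T \<alpha> x {x} {{x}}"
| step: "\<lbrakk>x \<in> topspace T;
          \<forall>n. openin T (U n);
          \<forall>m n. m \<noteq> n \<longrightarrow> U m \<inter> U n = {};
          mono a;
          \<forall>n. a n < \<alpha>;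
          \<forall>\<beta>. (\<forall>n. a n < \<beta>) \<longrightarrow> \<alpha> \<le> \<beta>;
          \<forall>n. scaffold T (a n) (c n) (Sn n) (SSn n);
          limitin T c x sequentially;
          \<forall>n. T closure_of (Sn n) \<subseteq> U n;
          \<forall>n. x \<notin> T closure_of (U n);
          S = insert x (\<Union>n. Sn n);
          SS = insert S (\<Union>n. SSn n)\<rbrakk>
        \<Longrightarrow> scaffold T \<alpha> x S SS"

definition strat_restr :: "'a set set \<Rightarrow> 'a set \<Rightarrow> 'a set set" where
  "strat_restr SS B = {A \<in> SS. A \<subseteq> B}"

definition strat_minus :: "'a set set \<Rightarrow> 'a set \<Rightarrow> 'a set set" where
  "strat_minus SS S = {A \<in> SS - {S}. \<forall>B \<in> SS - {S}. A \<subseteq> B \<longrightarrow> A = B}"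

inductive scaffold_le :: "'a topology \<Rightarrow> 'o::wellorder itself \<Rightarrow> 'a set \<Rightarrow> 'a set \<Rightarrow> 'a set set \<Rightarrow> bool"
  for T :: "'a topology" and Ot :: "'o itself" where
  "\<lbrakk>S' \<subseteq> S;
    scaffold T (\<alpha>::'o) x S SS;
    scaffold T (\<alpha>'::'o) x S' SS';
    strat_minus SS S \<noteq> {} \<longrightarrow> strat_minus SS' S' \<noteq> {};
    \<forall>B' \<in> strat_minus SS' S'. \<forall>(\<beta>::'o) y'. scaffold T \<beta> y' B' (strat_restr SS' B') \<longrightarrow>
       (\<exists>B \<in> strat_minus SS S. \<exists>y. scaffold T \<beta> y B (strat_restr SS B)
            \<and> scaffold_le T Ot B' B (strat_restr SS B))\<rbrakk>
   \<Longrightarrow> scaffold_le T Ot S' S SS"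

end

theory Submission
  imports Defs
begin

text \<open>Induction on the scaffold, with a stronger hypothesis (\<open>closed_shrinkable\<close>): for
  every family \<open>\<G>\<close> of fewer than b open neighbourhoods of the core there is a decreasing
  sequence of closed \<open>R m \<le>\<^bsub>SS\<^esub> S\<close> of the same height and core such that each
  member of \<open>\<G>\<close> contains some \<open>R m\<close>.

  In the step with core \<open>x\<close> and pieces \<open>Sn n\<close>, regularity and psi(X) < b give fewer
  than b open neighbourhoods \<open>W\<close> of \<open>x\<close> whose closures meet only in \<open>x\<close>. The
  hypothesis for \<open>Sn n\<close>, applied to those members of \<open>\<G>\<close> and those \<open>W\<close> that contain
  its core \<open>c n\<close>, yields sequences \<open>R n m\<close>. Fewer than b functions \<open>nat \<Rightarrow> nat\<close> are
  eventually dominated by a single \<open>g\<close>, so \<open>P n = R n (g n)\<close> eventually lies inside each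
  of these neighbourhoods. Then \<open>insert x (\<Union>k. P (k + m))\<close> is closed: a point
  \<open>z \<noteq> x\<close> avoids the closure of some \<open>W\<close>, and \<open>W\<close> contains all but finitely many of
  the closed sets \<open>P n\<close>.\<close>

lemma card_below_b_empty: "card_below_b {}"
  unfolding card_below_b_def unbounded_family_def by auto

lemma card_below_b_lepoll: "A \<lesssim> B \<Longrightarrow> card_below_b B \<Longrightarrow> card_below_b A"
  unfolding card_below_b_def using lepoll_trans by blast

lemma bounded_family_Un:
  assumes "\<not> unbounded_family F" and "\<not> unbounded_family G"
  shows "\<not> unbounded_family (F \<union> G)"
proof -
  obtain f g where f: "\<forall>h\<in>F. \<forall>\<^sub>F n in sequentially. h n \<le> f n"
    and g: "\<forall>h\<in>G. \<forall>\<^sub>F n in sequentially. h n \<le> g n"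
    using assms unfolding unbounded_family_def by blast
  have "\<forall>h\<in>F \<union> G. \<forall>\<^sub>F n in sequentially. h n \<le> max (f n) (g n)"
    using f g by (metis (mono_tags, lifting) Un_iff eventually_mono max.coboundedI1 max.coboundedI2)
  then show ?thesis
    unfolding unbounded_family_def by (intro notI) metis
qed

lemma card_below_b_Un:
  assumes A: "card_below_b A" and B: "card_below_b B"
  shows "card_below_b (A \<union> B)"
  unfolding card_below_b_def
proof (intro allI impI)
  fix F :: "(nat \<Rightarrow> nat) set"
  assume "F \<lesssim> A \<union> B"
  then obtain h where h: "inj_on h F" "h ` F \<subseteq> A \<union> B"
    unfolding lepoll_def by blast
  have "inj_on h {f\<in>F. h f \<in> A}" "inj_on h {f\<in>F. h f \<notin> A}"
    by (rule inj_on_subset[OF h(1)], blast)+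
  moreover have "h ` {f\<in>F. h f \<in> A} \<subseteq> A" "h ` {f\<in>F. h f \<notin> A} \<subseteq> B"
    using h(2) by blast+
  ultimately have "{f\<in>F. h f \<in> A} \<lesssim> A" "{f\<in>F. h f \<notin> A} \<lesssim> B"
    unfolding lepoll_def by blast+
  then have "\<not> unbounded_family {f\<in>F. h f \<in> A}" "\<not> unbounded_family {f\<in>F. h f \<notin> A}"
    using A B unfolding card_below_b_def by simp_all
  then have "\<not> unbounded_family ({f\<in>F. h f \<in> A} \<union> {f\<in>F. h f \<notin> A})"
    by (rule bounded_family_Un)
  moreover have "{f\<in>F. h f \<in> A} \<union> {f\<in>F. h f \<notin> A} = F"
    by blast
  ultimately show "\<not> unbounded_family F"
    by simp
qed

lemma card_below_b_bounded:
  assumes "card_below_b A"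
  obtains g where "\<And>a. a \<in> A \<Longrightarrow> \<forall>\<^sub>F n in sequentially. (\<phi> a :: nat \<Rightarrow> nat) n \<le> g n"
proof -
  have "\<not> unbounded_family (\<phi> ` A)"
    using assms image_lepoll unfolding card_below_b_def by blast
  then show ?thesis
    using that unfolding unbounded_family_def by blast
qed

lemma card_below_b_diagonal:
  fixes R :: "nat \<Rightarrow> nat \<Rightarrow> 'a set"
  assumes "card_below_b \<H>" and "\<And>n. decseq (R n)"
    and "\<And>H. H \<in> \<H> \<Longrightarrow> \<forall>\<^sub>F n in sequentially. \<exists>m. R n m \<subseteq> H"
  obtains g where "\<And>H. H \<in> \<H> \<Longrightarrow> \<forall>\<^sub>F n in sequentially. R n (g n) \<subseteq> H"
proof -
  \<comment> \<open>\<open>LEAST\<close> is junk for the \<open>n\<close> with no \<open>R n m \<subseteq> H\<close>; by assumption there are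
    only finitely many.\<close>
  obtain g where g: "\<And>H. H \<in> \<H> \<Longrightarrow> \<forall>\<^sub>F n in sequentially. (LEAST m. R n m \<subseteq> H) \<le> g n"
    using card_below_b_bounded[OF assms(1), of "\<lambda>H n. LEAST m. R n m \<subseteq> H"] by blast
  have "\<forall>\<^sub>F n in sequentially. R n (g n) \<subseteq> H" if "H \<in> \<H>" for H
    using eventually_conj[OF assms(3)[OF that] g[OF that]]
  proof (rule eventually_mono)
    fix n assume "(\<exists>m. R n m \<subseteq> H) \<and> (LEAST m. R n m \<subseteq> H) \<le> g n"
    then show "R n (g n) \<subseteq> H"
      using LeastI_ex[of "\<lambda>m. R n m \<subseteq> H"] assms(2)[of n] unfolding decseq_def by blast
  qed
  then show ?thesis
    using that by blast
qed

lemma psi_below_b_pseudobase: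
  assumes "psi_below_b T" and "z \<in> topspace T"
  obtains \<U> where "card_below_b \<U>" and "\<forall>U\<in>\<U>. openin T U \<and> z \<in> U"
    and "topspace T \<inter> \<Inter>\<U> = {z}"
proof -
  obtain K :: "'a set set" where "card_below_b K"
    and "\<forall>z\<in>topspace T. \<exists>\<U>. \<U> \<lesssim> K \<and> (\<forall>U\<in>\<U>. openin T U \<and> z \<in> U)
                                 \<and> topspace T \<inter> \<Inter>\<U> = {z}"
    using assms(1) unfolding psi_below_b_def by blast
  then show ?thesis
    using that assms(2) card_below_b_lepoll by blast
qed

lemma psi_below_b_imp_t1_space:
  assumes "psi_below_b T"
  shows "t1_space T"
  unfolding t1_space_def
proof (intro ballI impI)
  fix z y assume z: "z \<in> topspace T" and y: "y \<in> topspace T" and "z \<noteq> y"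
  obtain \<U> where "\<forall>U\<in>\<U>. openin T U \<and> z \<in> U" and meet: "topspace T \<inter> \<Inter>\<U> = {z}"
    using psi_below_b_pseudobase[OF assms z] by metis
  moreover have "y \<notin> \<Inter>\<U>"
    using meet y \<open>z \<noteq> y\<close> by auto
  ultimately show "\<exists>U. openin T U \<and> z \<in> U \<and> y \<notin> U"
    by blast
qed

lemma regular_space_closure_pseudobase:
  assumes "regular_space T" and "psi_below_b T" and x: "x \<in> topspace T"
  obtains \<W> where "card_below_b \<W>" and "\<forall>W\<in>\<W>. openin T W \<and> x \<in> W"
    and "\<forall>z\<in>topspace T - {x}. \<exists>W\<in>\<W>. z \<notin> T closure_of W"
proof -
  obtain \<U> where \<U>: "card_below_b \<U>" "\<forall>U\<in>\<U>. openin T U \<and> x \<in> U"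
    and meet: "topspace T \<inter> \<Inter>\<U> = {x}"
    using psi_below_b_pseudobase[OF assms(2) x] by blast
  have "\<exists>W. openin T W \<and> x \<in> W \<and> T closure_of W \<subseteq> U" if "U \<in> \<U>" for U
  proof -
    have "closedin T (topspace T - U)" "x \<in> topspace T - (topspace T - U)"
      using \<U>(2) that x by auto
    then obtain W where "openin T W" "x \<in> W" "disjnt (topspace T - U) (T closure_of W)"
      using assms(1) unfolding regular_space by blast
    then show ?thesis
      using closure_of_subset_topspace[of T W] unfolding disjnt_def by blast
  qed
  then obtain sh where sh: "\<And>U. U \<in> \<U> \<Longrightarrow> openin T (sh U) \<and> x \<in> sh U \<and> T closure_of (sh U) \<subseteq> U"
    by metis
  show ?thesis
  proof (rule that[of "sh ` \<U>"])
    show "card_below_b (sh ` \<U>)"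
      using card_below_b_lepoll[OF image_lepoll \<U>(1)] .
    show "\<forall>W\<in>sh ` \<U>. openin T W \<and> x \<in> W"
      using sh by blast
    show "\<forall>z\<in>topspace T - {x}. \<exists>W\<in>sh ` \<U>. z \<notin> T closure_of W"
    proof
      fix z assume "z \<in> topspace T - {x}"
      then obtain U where "U \<in> \<U>" "z \<notin> U"
        using meet by auto
      then show "\<exists>W\<in>sh ` \<U>. z \<notin> T closure_of W"
        using sh by blast
    qed
  qed
qed

lemma closedin_insert_Union_sequence:
  assumes x: "x \<in> topspace T" and closed: "\<And>n. closedin T (P n)"
    and sep: "\<And>z. z \<in> topspace T \<Longrightarrow> z \<noteq> x \<Longrightarrow>
                 \<exists>W. x \<in> W \<and> z \<notin> T closure_of W \<and> (\<forall>\<^sub>F n in sequentially. P n \<subseteq> W)"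
  shows "closedin T (insert x (\<Union>n. P n))"
proof -
  have "z \<in> insert x (\<Union>n. P n)" if z: "z \<in> T closure_of insert x (\<Union>n. P n)" for z
  proof (rule ccontr)
    assume z_notin: "z \<notin> insert x (\<Union>n. P n)"
    moreover have "z \<in> topspace T"
      using closure_of_subset_topspace z by fast
    ultimately obtain W where W: "x \<in> W" "z \<notin> T closure_of W"
      and "\<forall>\<^sub>F n in sequentially. P n \<subseteq> W"
      using sep by blast
    then obtain N where N: "\<forall>n\<ge>N. P n \<subseteq> W"
      unfolding eventually_sequentially by blast
    define C where "C = (\<Union>n<N. P n)"
    have "closedin T C"
      unfolding C_def using closed by (intro closedin_Union) auto
    have "insert x (\<Union>n. P n) \<subseteq> C \<union> W"
      using W(1) N unfolding C_def by auto (meson lessThan_iff not_le subsetD)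
    then have "T closure_of insert x (\<Union>n. P n) \<subseteq> T closure_of (C \<union> W)"
      by (rule closure_of_mono)
    also have "\<dots> = C \<union> T closure_of W"
      using closure_of_closedin[OF \<open>closedin T C\<close>] by simp
    finally have "z \<in> C"
      using z W(2) by blast
    then show False
      using z_notin unfolding C_def by blast
  qed
  moreover have "insert x (\<Union>n. P n) \<subseteq> topspace T"
    using x closed closedin_subset by blast
  ultimately show ?thesis
    using closure_of_subset_eq by blast
qed

lemma scaffoldD:
  assumes "scaffold T \<alpha> x S SS"
  shows "x \<in> S" and "S \<subseteq> topspace T" and "S \<in> SS"
    and "A \<in> SS \<Longrightarrow> A \<subseteq> S" and "A \<in> SS \<Longrightarrow> A \<noteq> {}"
proof -
  have "x \<in> S \<and> S \<subseteq> topspace T \<and> S \<in> SS \<and> (\<forall>A\<in>SS. A \<subseteq> S \<and> A \<noteq> {})"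
    using assms
  proof (induction rule: scaffold.induct)
    case (zero \<alpha> x)
    then show ?case by auto
  next
    case (step x U a \<alpha> c Sn SSn S SS)
    have IH: "Sn n \<subseteq> topspace T" "\<forall>A\<in>SSn n. A \<subseteq> Sn n \<and> A \<noteq> {}" for n
      using step.IH by simp_all
    have "\<forall>A\<in>\<Union>n. SSn n. A \<subseteq> S \<and> A \<noteq> {}"
      using IH(2) unfolding step.hyps(10) by blast
    moreover have "S \<subseteq> topspace T"
      using IH(1) step.hyps(1) unfolding step.hyps(10) by blast
    ultimately show ?case
      using step.hyps(10,11) by simp
  qed
  then show "x \<in> S" "S \<subseteq> topspace T" "S \<in> SS"
    and "A \<in> SS \<Longrightarrow> A \<subseteq> S" "A \<in> SS \<Longrightarrow> A \<noteq> {}"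
    by blast+
qed

lemma scaffold_le_subset: "scaffold_le T Ot S' S SS \<Longrightarrow> S' \<subseteq> S"
  by (erule scaffold_le.cases) simp

text \<open>The premises of \<open>scaffold.step\<close>, verbatim, so that the step case of an induction
  over \<open>scaffold\<close> interprets this locale directly.\<close>

locale scaffold_step =
  fixes T :: "'a topology" and x :: 'a and U :: "nat \<Rightarrow> 'a set" and a :: "nat \<Rightarrow> 'o::wellorder"
    and \<alpha> :: 'o and c :: "nat \<Rightarrow> 'a" and Sn :: "nat \<Rightarrow> 'a set" and SSn :: "nat \<Rightarrow> 'a set set"
    and S :: "'a set" and SS :: "'a set set"
  assumes core_in_topspace: "x \<in> topspace T"
    and openin_U: "\<forall>n. openin T (U n)"
    and disjoint_U: "\<forall>m n. m \<noteq> n \<longrightarrow> U m \<inter> U n = {}"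
    and mono_heights: "mono a"
    and heights_below: "\<forall>n. a n < \<alpha>"
    and height_least: "\<forall>\<beta>. (\<forall>n. a n < \<beta>) \<longrightarrow> \<alpha> \<le> \<beta>"
    and pieces: "\<forall>n. scaffold T (a n) (c n) (Sn n) (SSn n)"
    and cores_converge: "limitin T c x sequentially"
    and closure_piece_subset: "\<forall>n. T closure_of Sn n \<subseteq> U n"
    and core_notin_closure: "\<forall>n. x \<notin> T closure_of U n"
    and S_eq: "S = insert x (\<Union>n. Sn n)"
    and SS_eq: "SS = insert S (\<Union>n. SSn n)"
begin

lemma scaffold: "scaffold T \<alpha> x S SS"
  by (rule scaffold.step[OF core_in_topspace openin_U disjoint_U mono_heights heights_below
        height_least pieces cores_converge closure_piece_subset core_notin_closure S_eq SS_eq])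

lemma piece_subset_U: "Sn n \<subseteq> U n"
  using closure_of_subset[OF scaffoldD(2)[OF pieces[rule_format]]] closure_piece_subset by blast

lemma core_notin_U: "x \<notin> U n"
  using closure_of_subset[OF openin_subset[OF openin_U[rule_format]]] core_notin_closure by blast

lemma S_not_singleton: "S \<noteq> {z}"
proof -
  have "c 0 \<in> S" "c 0 \<noteq> x"
    using scaffoldD(1)[OF pieces[rule_format, of 0]] piece_subset_U[of 0] core_notin_U[of 0]
    unfolding S_eq by blast+
  then show ?thesis
    unfolding S_eq by blast
qed

lemma piece_index_unique:
  assumes "A \<in> SSn n" and "A \<subseteq> Sn k"
  shows "k = n"
proof (rule ccontr)
  assume "k \<noteq> n"
  have "A \<subseteq> Sn n" "A \<noteq> {}"
    using scaffoldD(4,5)[OF pieces[rule_format, of n] assms(1)] by blast+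
  then show False
    using assms(2) piece_subset_U[of n] piece_subset_U[of k] disjoint_U \<open>k \<noteq> n\<close> by blast
qed

lemma strata_minus_S: "SS - {S} = (\<Union>n. SSn n)"
proof -
  have "A \<noteq> S" if "A \<in> SSn n" for A n
    using scaffoldD(4)[OF pieces[rule_format, of n] that] piece_subset_U[of n] core_notin_U[of n]
    unfolding S_eq by blast
  then show ?thesis
    unfolding SS_eq by blast
qed

lemma strat_minus_eq: "strat_minus SS S = range Sn"
proof -
  have piece: "Sn n \<in> SSn n" for n
    using scaffoldD(3)[OF pieces[rule_format]] .
  have maximal: "A = Sn n" if "A \<in> SSn n" "\<forall>B\<in>\<Union>n. SSn n. A \<subseteq> B \<longrightarrow> A = B" for A n
    using that scaffoldD(4)[OF pieces[rule_format, of n] that(1)] piece by blast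
  have piece_maximal: "Sn n = B" if "B \<in> SSn k" "Sn n \<subseteq> B" for B n k
  proof -
    have "B \<subseteq> Sn k"
      using scaffoldD(4)[OF pieces[rule_format, of k] that(1)] .
    then have "k = n"
      using piece_index_unique[OF piece[of n]] that(2) by blast
    then show ?thesis
      using \<open>B \<subseteq> Sn k\<close> that(2) by blast
  qed
  show ?thesis
  proof
    show "strat_minus SS S \<subseteq> range Sn"
    proof
      fix A assume "A \<in> strat_minus SS S"
      then obtain n where "A \<in> SSn n" "\<forall>B\<in>\<Union>n. SSn n. A \<subseteq> B \<longrightarrow> A = B"
        unfolding strat_minus_def strata_minus_S by blast
      then show "A \<in> range Sn"
        using maximal by blast
    qed
    show "range Sn \<subseteq> strat_minus SS S"
      unfolding strat_minus_def strata_minus_S using piece piece_maximal by blast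
  qed
qed

lemma strat_restr_eq: "strat_restr SS (Sn n) = SSn n"
proof -
  have "A \<in> SSn n" if "A \<in> SS" "A \<subseteq> Sn n" for A
  proof -
    have "x \<notin> A"
      using that(2) piece_subset_U[of n] core_notin_U[of n] by blast
    then have "A \<noteq> S"
      unfolding S_eq by (metis insertI1)
    then have "A \<in> (\<Union>n. SSn n)"
      using that(1) by (simp flip: strata_minus_S)
    then obtain k where "A \<in> SSn k"
      by blast
    then show ?thesis
      using piece_index_unique that(2) by blast
  qed
  moreover have "A \<in> SS" "A \<subseteq> Sn n" if "A \<in> SSn n" for A
    using that scaffoldD(4)[OF pieces[rule_format, of n]] unfolding SS_eq by blast+
  ultimately show ?thesis
    unfolding strat_restr_def by blast
qed

lemma scaffold_step_tail:
  assumes P: "\<forall>n. scaffold T (a n) (c n) (P n) (PS n)" and P_subset: "\<forall>n. P n \<subseteq> Sn n"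
  shows "scaffold_step T x (\<lambda>k. U (k + m)) (\<lambda>k. a (k + m)) \<alpha> (\<lambda>k. c (k + m))
           (\<lambda>k. P (k + m)) (\<lambda>k. PS (k + m))
           (insert x (\<Union>k. P (k + m))) (insert (insert x (\<Union>k. P (k + m))) (\<Union>k. PS (k + m)))"
proof
  show "\<forall>\<beta>. (\<forall>k. a (k + m) < \<beta>) \<longrightarrow> \<alpha> \<le> \<beta>"
  proof (intro allI impI)
    fix \<beta> assume "\<forall>k. a (k + m) < \<beta>"
    then have "\<forall>n. a n < \<beta>"
      using mono_heights by (metis le_add1 le_less_trans monoD)
    then show "\<alpha> \<le> \<beta>"
      using height_least by blast
  qed
  show "\<forall>k. T closure_of P (k + m) \<subseteq> U (k + m)"
    using closure_of_mono[OF P_subset[rule_format]] closure_piece_subset by blast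
  show "limitin T (\<lambda>k. c (k + m)) x sequentially"
    using limitin_sequentially_offset[OF cores_converge] .
  show "mono (\<lambda>k. a (k + m))"
    using mono_heights unfolding mono_def by simp
qed (use core_in_topspace openin_U disjoint_U heights_below P core_notin_closure in auto)

end

lemma scaffold_height_unique:
  assumes "scaffold T \<alpha> x S SS" and "scaffold T \<beta> y S SS"
  shows "\<alpha> = \<beta>"
  using assms
proof (induction arbitrary: \<beta> y rule: scaffold.induct)
  case (zero \<alpha> x)
  from zero.prems show ?case
  proof cases
    case zero
    then show ?thesis
      using zero.hyps(1) by (simp add: order.antisym)
  next
    case (step U a c Sn SSn)
    then interpret scaffold_step T y U a \<beta> c Sn SSn "{x}" "{{x}}"
      by (simp add: scaffold_step_def)
    show ?thesis
      using S_not_singleton by blast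
  qed
next
  case (step x U a \<alpha> c Sn SSn S SS)
  have "\<forall>n. scaffold T (a n) (c n) (Sn n) (SSn n)"
    using step.IH by simp
  with step.hyps interpret scaffold_step T x U a \<alpha> c Sn SSn S SS
    by (simp add: scaffold_step_def)
  from step.prems show ?case
  proof cases
    case zero
    then show ?thesis
      using S_not_singleton by blast
  next
    case (step U' a' c' Sn' SSn')
    then interpret S': scaffold_step T y U' a' \<beta> c' Sn' SSn' S SS
      by (simp add: scaffold_step_def)
    \<comment> \<open>Both decompositions are read off from \<open>SS\<close>, so they have the same pieces; hence
      \<open>\<alpha>\<close> and \<open>\<beta>\<close> are least strict upper bounds of the same heights.\<close>
    have same_height: "a n = a' k" if "Sn n = Sn' k" for n k
    proof -
      have "SSn n = SSn' k"
        using strat_restr_eq[of n] S'.strat_restr_eq[of k] that by simp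
      then have "scaffold T (a' k) (c' k) (Sn n) (SSn n)"
        using S'.pieces that by simp
      then show ?thesis
        using step.IH by blast
    qed
    have "range Sn = range Sn'"
      using strat_minus_eq S'.strat_minus_eq by simp
    then have "\<forall>n. \<exists>k. a n = a' k" "\<forall>k. \<exists>n. a n = a' k"
      using same_height by (metis rangeE rangeI)+
    then have "\<alpha> \<le> \<beta>" "\<beta> \<le> \<alpha>"
      using height_least heights_below S'.height_least S'.heights_below by metis+
    then show ?thesis
      by simp
  qed
qed

context scaffold_step
begin

lemma tail_scaffold_le:
  assumes P: "\<forall>n. scaffold T (a n) (c n) (P n) (PS n)"
    and P_le: "\<forall>n. scaffold_le T TYPE('o) (P n) (Sn n) (SSn n)"
  shows "scaffold_le T TYPE('o) (insert x (\<Union>k. P (k + m))) S SS"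
proof -
  define R where "R = insert x (\<Union>k. P (k + m))"
  define RS where "RS = insert R (\<Union>k. PS (k + m))"
  have P_subset: "\<forall>n. P n \<subseteq> Sn n"
    using P_le scaffold_le_subset by blast
  interpret R: scaffold_step T x "\<lambda>k. U (k + m)" "\<lambda>k. a (k + m)" \<alpha> "\<lambda>k. c (k + m)"
    "\<lambda>k. P (k + m)" "\<lambda>k. PS (k + m)" R RS
    unfolding R_def RS_def using scaffold_step_tail[OF P P_subset] .
  have "scaffold_le T TYPE('o) R S SS"
  proof (rule scaffold_le.intros[OF _ scaffold R.scaffold])
    show "R \<subseteq> S"
      using P_subset unfolding R_def S_eq by blast
    show "strat_minus SS S \<noteq> {} \<longrightarrow> strat_minus RS R \<noteq> {}"
      using R.strat_minus_eq by simp
    show "\<forall>B'\<in>strat_minus RS R. \<forall>(\<beta>::'o) y'. scaffold T \<beta> y' B' (strat_restr RS B') \<longrightarrow>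
            (\<exists>B\<in>strat_minus SS S. \<exists>y. scaffold T \<beta> y B (strat_restr SS B)
               \<and> scaffold_le T TYPE('o) B' B (strat_restr SS B))"
    proof (intro ballI allI impI)
      fix B' and \<beta> :: 'o and y'
      assume "B' \<in> strat_minus RS R" and B': "scaffold T \<beta> y' B' (strat_restr RS B')"
      then obtain k where k: "B' = P (k + m)"
        using R.strat_minus_eq by auto
      have "scaffold T \<beta> y' (P (k + m)) (PS (k + m))"
        using B' R.strat_restr_eq[of k] k by simp
      \<comment> \<open>\<open>scaffold_le\<close> quantifies over every height of \<open>B'\<close>, but there is only one.\<close>
      then have "\<beta> = a (k + m)"
        using P by (blast intro: scaffold_height_unique)
      then have "scaffold T \<beta> (c (k + m)) (Sn (k + m)) (strat_restr SS (Sn (k + m)))"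
        using pieces strat_restr_eq by simp
      moreover have "scaffold_le T TYPE('o) B' (Sn (k + m)) (strat_restr SS (Sn (k + m)))"
        using P_le k strat_restr_eq by simp
      moreover have "Sn (k + m) \<in> strat_minus SS S"
        using strat_minus_eq by simp
      ultimately show "\<exists>B\<in>strat_minus SS S. \<exists>y. scaffold T \<beta> y B (strat_restr SS B)
                          \<and> scaffold_le T TYPE('o) B' B (strat_restr SS B)"
        by blast
    qed
  qed
  then show ?thesis
    unfolding R_def .
qed

end

definition shrinking_subscaffolds ::
    "'a topology \<Rightarrow> 'o::wellorder \<Rightarrow> 'a \<Rightarrow> 'a set \<Rightarrow> 'a set set \<Rightarrow> 'a set set
      \<Rightarrow> (nat \<Rightarrow> 'a set) \<Rightarrow> (nat \<Rightarrow> 'a set set) \<Rightarrow> bool" where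
  "shrinking_subscaffolds T \<alpha> x S SS \<G> R RS \<longleftrightarrow>
     (\<forall>m. scaffold T \<alpha> x (R m) (RS m) \<and> scaffold_le T TYPE('o) (R m) S SS \<and> closedin T (R m))
     \<and> decseq R \<and> (\<forall>G\<in>\<G>. \<exists>m. R m \<subseteq> G)"

definition closed_shrinkable :: "'a topology \<Rightarrow> 'o::wellorder \<Rightarrow> 'a \<Rightarrow> 'a set \<Rightarrow> 'a set set \<Rightarrow> bool" where
  "closed_shrinkable T \<alpha> x S SS \<longleftrightarrow>
     (\<forall>\<G>. card_below_b \<G> \<and> (\<forall>G\<in>\<G>. openin T G \<and> x \<in> G)
        \<longrightarrow> (\<exists>R RS. shrinking_subscaffolds T \<alpha> x S SS \<G> R RS))"

lemma closed_shrinkable_singleton: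
  fixes \<alpha> :: "'o::wellorder"
  assumes "t1_space T" and sc: "scaffold T \<alpha> x {x} {{x}}"
  shows "closed_shrinkable T \<alpha> x {x} {{x}}"
proof -
  have "strat_minus {{x}} {x} = {}"
    unfolding strat_minus_def by auto
  then have "scaffold_le T TYPE('o) {x} {x} {{x}}"
    by (intro scaffold_le.intros[OF order_refl sc sc]) simp_all
  moreover have "closedin T {x}"
    using closedin_t1_singleton[OF assms(1)] scaffoldD(2)[OF sc] by simp
  ultimately have "shrinking_subscaffolds T \<alpha> x {x} {{x}} \<G> (\<lambda>m. {x}) (\<lambda>m. {{x}})"
    if "\<forall>G\<in>\<G>. openin T G \<and> x \<in> G" for \<G>
    using sc that unfolding shrinking_subscaffolds_def decseq_def by auto
  then show ?thesis
    unfolding closed_shrinkable_def by blast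
qed

context scaffold_step
begin

lemma shrinking_subscaffolds_tails:
  assumes P: "\<forall>n. scaffold T (a n) (c n) (P n) (PS n)"
    and P_le: "\<forall>n. scaffold_le T TYPE('o) (P n) (Sn n) (SSn n)"
    and P_closed: "\<forall>n. closedin T (P n)"
    and separating: "\<forall>z\<in>topspace T - {x}.
                       \<exists>W. x \<in> W \<and> z \<notin> T closure_of W \<and> (\<forall>\<^sub>F n in sequentially. P n \<subseteq> W)"
    and absorbing: "\<forall>G\<in>\<G>. x \<in> G \<and> (\<forall>\<^sub>F n in sequentially. P n \<subseteq> G)"
  shows "shrinking_subscaffolds T \<alpha> x S SS \<G> (\<lambda>m. insert x (\<Union>k. P (k + m)))
           (\<lambda>m. insert (insert x (\<Union>k. P (k + m))) (\<Union>k. PS (k + m)))"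
  unfolding shrinking_subscaffolds_def
proof (intro conjI allI ballI)
  fix m
  have P_subset: "\<forall>n. P n \<subseteq> Sn n"
    using P_le scaffold_le_subset by blast
  show "scaffold T \<alpha> x (insert x (\<Union>k. P (k + m)))
          (insert (insert x (\<Union>k. P (k + m))) (\<Union>k. PS (k + m)))"
    using scaffold_step.scaffold[OF scaffold_step_tail[OF P P_subset]] .
  show "scaffold_le T TYPE('o) (insert x (\<Union>k. P (k + m))) S SS"
    using tail_scaffold_le[OF P P_le] .
  show "closedin T (insert x (\<Union>k. P (k + m)))"
  proof (rule closedin_insert_Union_sequence[OF core_in_topspace])
    show "closedin T (P (k + m))" for k
      using P_closed by blast
    show "\<exists>W. x \<in> W \<and> z \<notin> T closure_of W \<and> (\<forall>\<^sub>F k in sequentially. P (k + m) \<subseteq> W)"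
      if "z \<in> topspace T" "z \<noteq> x" for z
      using separating that sequentially_offset by blast
  qed
next
  show "decseq (\<lambda>m. insert x (\<Union>k. P (k + m)))"
    unfolding decseq_def
  proof (intro allI impI subsetI)
    fix m m' z assume "m \<le> m'" and z: "z \<in> insert x (\<Union>k. P (k + m'))"
    show "z \<in> insert x (\<Union>k. P (k + m))"
    proof (cases "z = x")
      case False
      then obtain k where "z \<in> P (k + m')"
        using z by blast
      then have "z \<in> P ((k + (m' - m)) + m)"
        using \<open>m \<le> m'\<close> by simp
      then show ?thesis
        by blast
    qed simp
  qed
next
  fix G assume "G \<in> \<G>"
  then obtain N where "x \<in> G" and N: "\<forall>n\<ge>N. P n \<subseteq> G"
    using absorbing unfolding eventually_sequentially by blast
  moreover have "P (k + N) \<subseteq> G" for k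
    using N by simp
  ultimately have "insert x (\<Union>k. P (k + N)) \<subseteq> G"
    by blast
  then show "\<exists>m. insert x (\<Union>k. P (k + m)) \<subseteq> G"
    by blast
qed

lemma diagonal_pieces:
  assumes IH: "\<forall>n. closed_shrinkable T (a n) (c n) (Sn n) (SSn n)"
    and \<H>_small: "card_below_b \<H>" and \<H>: "\<forall>H\<in>\<H>. openin T H \<and> x \<in> H"
  obtains P PS where "\<forall>n. scaffold T (a n) (c n) (P n) (PS n)"
    and "\<forall>n. scaffold_le T TYPE('o) (P n) (Sn n) (SSn n)" and "\<forall>n. closedin T (P n)"
    and "\<forall>H\<in>\<H>. \<forall>\<^sub>F n in sequentially. P n \<subseteq> H"
proof -
  have "\<exists>R RS. shrinking_subscaffolds T (a n) (c n) (Sn n) (SSn n) {H\<in>\<H>. c n \<in> H} R RS" for n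
  proof -
    have "card_below_b {H\<in>\<H>. c n \<in> H}"
      by (rule card_below_b_lepoll[OF subset_imp_lepoll \<H>_small]) blast
    then show ?thesis
      using IH \<H> unfolding closed_shrinkable_def by simp
  qed
  then obtain R RS
    where R: "\<And>n. shrinking_subscaffolds T (a n) (c n) (Sn n) (SSn n) {H\<in>\<H>. c n \<in> H} (R n) (RS n)"
    by metis
  have "\<forall>\<^sub>F n in sequentially. \<exists>m. R n m \<subseteq> H" if "H \<in> \<H>" for H
  proof -
    have "\<forall>\<^sub>F n in sequentially. c n \<in> H"
      using cores_converge \<H> that unfolding limitin_def by blast
    then show ?thesis
      by (rule eventually_mono) (use R that in \<open>auto simp: shrinking_subscaffolds_def\<close>)
  qed
  moreover have "decseq (R n)" for n
    using R unfolding shrinking_subscaffolds_def by blast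
  ultimately obtain g where "\<And>H. H \<in> \<H> \<Longrightarrow> \<forall>\<^sub>F n in sequentially. R n (g n) \<subseteq> H"
    using card_below_b_diagonal[OF \<H>_small] by blast
  then have "\<forall>H\<in>\<H>. \<forall>\<^sub>F n in sequentially. R n (g n) \<subseteq> H"
    by blast
  moreover have "\<forall>n. scaffold T (a n) (c n) (R n (g n)) (RS n (g n))"
    "\<forall>n. scaffold_le T TYPE('o) (R n (g n)) (Sn n) (SSn n)" "\<forall>n. closedin T (R n (g n))"
    using R unfolding shrinking_subscaffolds_def by blast+
  ultimately show ?thesis
    by (rule that[rotated -1])
qed

lemma closed_shrinkable_step:
  assumes "regular_space T" and "psi_below_b T"
    and IH: "\<forall>n. closed_shrinkable T (a n) (c n) (Sn n) (SSn n)"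
  shows "closed_shrinkable T \<alpha> x S SS"
  unfolding closed_shrinkable_def
proof (intro allI impI, elim conjE)
  fix \<G> :: "'a set set"
  assume \<G>_small: "card_below_b \<G>" and \<G>: "\<forall>G\<in>\<G>. openin T G \<and> x \<in> G"
  obtain \<W> where \<W>: "card_below_b \<W>" "\<forall>W\<in>\<W>. openin T W \<and> x \<in> W"
    and separating: "\<forall>z\<in>topspace T - {x}. \<exists>W\<in>\<W>. z \<notin> T closure_of W"
    using regular_space_closure_pseudobase[OF assms(1,2) core_in_topspace] by blast
  have "card_below_b (\<G> \<union> \<W>)"
    by (rule card_below_b_Un[OF \<G>_small \<W>(1)])
  moreover have "\<forall>H\<in>\<G> \<union> \<W>. openin T H \<and> x \<in> H"
    using \<G> \<W>(2) by auto
  ultimately obtain P PS where P: "\<forall>n. scaffold T (a n) (c n) (P n) (PS n)"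
    "\<forall>n. scaffold_le T TYPE('o) (P n) (Sn n) (SSn n)" "\<forall>n. closedin T (P n)"
    and eventually_in: "\<forall>H\<in>\<G> \<union> \<W>. \<forall>\<^sub>F n in sequentially. P n \<subseteq> H"
    using diagonal_pieces[OF IH] by metis
  have "shrinking_subscaffolds T \<alpha> x S SS \<G> (\<lambda>m. insert x (\<Union>k. P (k + m)))
          (\<lambda>m. insert (insert x (\<Union>k. P (k + m))) (\<Union>k. PS (k + m)))"
  proof (rule shrinking_subscaffolds_tails[OF P])
    show "\<forall>z\<in>topspace T - {x}.
            \<exists>W. x \<in> W \<and> z \<notin> T closure_of W \<and> (\<forall>\<^sub>F n in sequentially. P n \<subseteq> W)"
    proof
      fix z assume "z \<in> topspace T - {x}"
      then obtain W where "W \<in> \<W>" "z \<notin> T closure_of W"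
        using separating by blast
      then show "\<exists>W. x \<in> W \<and> z \<notin> T closure_of W \<and> (\<forall>\<^sub>F n in sequentially. P n \<subseteq> W)"
        using \<W>(2) eventually_in by blast
    qed
    show "\<forall>G\<in>\<G>. x \<in> G \<and> (\<forall>\<^sub>F n in sequentially. P n \<subseteq> G)"
      using \<G> eventually_in by blast
  qed
  then show "\<exists>R RS. shrinking_subscaffolds T \<alpha> x S SS \<G> R RS"
    by blast
qed

end

theorem closed_shrinkable_scaffold:
  assumes "regular_space T" and "psi_below_b T" and "scaffold T \<alpha> x S SS"
  shows "closed_shrinkable T \<alpha> x S SS"
  using assms(3)
proof (induction rule: scaffold.induct)
  case (zero \<alpha> x)
  show ?case
    using closed_shrinkable_singleton[OF psi_below_b_imp_t1_space[OF assms(2)] scaffold.zero[OF zero]] .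
next
  case (step x U a \<alpha> c Sn SSn S SS)
  have "\<forall>n. scaffold T (a n) (c n) (Sn n) (SSn n)"
    using step.IH by simp
  with step.hyps interpret scaffold_step T x U a \<alpha> c Sn SSn S SS
    by (simp add: scaffold_step_def)
  show ?case
    using closed_shrinkable_step[OF assms(1,2)] step.IH by simp
qed

theorem corollary2:
  fixes Y :: "'a topology" and X :: "'a set" and \<alpha> :: "'o::wellorder"
    and x :: 'a and S :: "'a set" and SS :: "'a set set"
  assumes "regular_space Y"
    and "X \<subseteq> topspace Y"
    and "psi_below_b (subtopology Y X)"
    and "scaffold (subtopology Y X) \<alpha> x S SS"
  shows "\<exists>S'. scaffold_le (subtopology Y X) TYPE('o) S' S SS \<and> closedin (subtopology Y X) S'"
proof -
  have "closed_shrinkable (subtopology Y X) \<alpha> x S SS"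
    by (rule closed_shrinkable_scaffold[OF regular_space_subtopology[OF assms(1)] assms(3,4)])
  then have "\<exists>R RS. shrinking_subscaffolds (subtopology Y X) \<alpha> x S SS {} R RS"
    using card_below_b_empty unfolding closed_shrinkable_def by (metis empty_iff)
  then obtain R RS where "shrinking_subscaffolds (subtopology Y X) \<alpha> x S SS {} R RS"
    by blast
  then have "scaffold_le (subtopology Y X) TYPE('o) (R 0) S SS \<and> closedin (subtopology Y X) (R 0)"
    unfolding shrinking_subscaffolds_def by simp
  then show ?thesis
    by blast
qed

end
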